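(* In the standing setting, assume stochastic monotonicity (SM). Then for all $t\in\{1,\dots,\overline R\}$, all $k\in\{0,\dots,\sigma^v(t-1)\}$ and all $\delta\in\{0,\dots,N-1\}$, $$\varphi^v(t,k,\delta)\ge\varphi^v(t,k,\delta+1).$$
   Context: Standing setting. Integers $n\ge2$, $m\ge1$; $N:=(n-1)m$. Reals $p_{\mathrm{init}}\ge0$, $\Delta P>0$; the price at round $t\ge0$ is $p_t:=p_{\mathrm{init}}+t\Delta P$. The player's valuation $v:\{0,\dots,m\}\to[0,\infty)$ satisfies $v(0)=0$ and is non-decreasing and concave. $\overline R:=\lceil (v(1)-p_{\mathrm{init}})/\Delta P\rceil$, assumed $\ge1$. For $t\ge0$, $\sigma^v(t):=\min\operatorname{argmax}_{0\le u\le m}(v(u)-up_t)$. The opponent is given by random variables $Z_1\ge Z_2\ge\dots\ge Z_N\ge0$ (a.s.) on a probability space $(\Omega,\mathcal F,\mathbb P)$; its demand at price $p$ is $\delta(p):=\sum_{j=1}^N\mathbf 1\{Z_j>p\}$. For $t\ge1$ fix transition kernels $K_t(\delta'\mid\delta)$ ($\delta,\delta'\in\{0,\dots,N\}$), each $K_t(\cdot\mid\delta)$ a probability on $\{0,\dots,\delta\}$, with $K_t(\delta'\mid\delta)=\mathbb P(\delta(p_t)=\delta'\mid\delta(p_{t-1})=\delta)$ whenever $\mathbb P(\delta(p_{t-1})=\delta)>0$. Value function: for $t\in\{1,\dots,\overline R\}$, $k\in\{0,\dots,m\}$, $\delta\in\{0,\dots,N\}$: $\varphi^v(t,k,\delta):=v(k)-kp_{t-1}$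 if $k+\delta\le m$; $:=\max_{0\le u\le k}\sum_{\delta'=0}^N K_t(\delta'\mid\delta)\varphi^v(t+1,u,\delta')$ if $k+\delta>m$ and $t<\overline R$; $:=0$ if $k+\delta>m$ and $t=\overline R$. Stochastic monotonicity (SM): for every $t\in\{1,\dots,\overline R-1\}$, $s\in\{0,\dots,N\}$ and $\delta\in\{0,\dots,N-1\}$, $\sum_{\delta'\ge s}K_t(\delta'\mid\delta+1)\ge\sum_{\delta'\ge s}K_t(\delta'\mid\delta)$. *)

theory Defs
  imports "HOL-Probability.Probability"
begin

definition price :: "real \<Rightarrow> real \<Rightarrow> nat \<Rightarrow> real" where
  "price pinit dP t = pinit + real t * dP"

definition Rbar :: "(nat \<Rightarrow> real) \<Rightarrow> real \<Rightarrow> real \<Rightarrow> nat" where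
  "Rbar v pinit dP = nat \<lceil>(v 1 - pinit) / dP\<rceil>"

definition sigma :: "(nat \<Rightarrow> real) \<Rightarrow> nat \<Rightarrow> real \<Rightarrow> real \<Rightarrow> nat \<Rightarrow> nat" where
  "sigma v m pinit dP t =
     (LEAST u. u \<le> m \<and> (\<forall>w\<le>m. v w - real w * price pinit dP t \<le> v u - real u * price pinit dP t))"

definition demand :: "(nat \<Rightarrow> 'a \<Rightarrow> real) \<Rightarrow> nat \<Rightarrow> real \<Rightarrow> 'a \<Rightarrow> nat" where
  "demand Z N p \<omega> = card {j \<in> {1..N}. Z j \<omega> > p}"

text \<open>Value function, by backward recursion on r = R-bar - t (the number of remaining
  rounds after t).  K t d' d stands for K_t(d' | d).\<close>
primrec phi_aux :: "(nat \<Rightarrow> real) \<Rightarrow> nat \<Rightarrow> nat \<Rightarrow> real \<Rightarrow> real \<Rightarrow> (nat \<Rightarrow> nat \<Rightarrow> nat \<Rightarrow> real)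
    \<Rightarrow> nat \<Rightarrow> nat \<Rightarrow> nat \<Rightarrow> nat \<Rightarrow> real" where
  "phi_aux v m N pinit dP K 0 t k d =
     (if k + d \<le> m then v k - real k * price pinit dP (t - 1) else 0)"
| "phi_aux v m N pinit dP K (Suc r) t k d =
     (if k + d \<le> m then v k - real k * price pinit dP (t - 1)
      else Max ((\<lambda>u. \<Sum>d'\<in>{0..N}. K t d' d * phi_aux v m N pinit dP K r (t + 1) u d') ` {0..k}))"

definition phi :: "(nat \<Rightarrow> real) \<Rightarrow> nat \<Rightarrow> nat \<Rightarrow> real \<Rightarrow> real \<Rightarrow> (nat \<Rightarrow> nat \<Rightarrow> nat \<Rightarrow> real)
    \<Rightarrow> nat \<Rightarrow> nat \<Rightarrow> nat \<Rightarrow> real" where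
  "phi v m N pinit dP K t k d = phi_aux v m N pinit dP K (Rbar v pinit dP - t) t k d"

end

(* By (SM) the next
   demand is stochastically larger after demand d+1 than after d, and by summation
   by parts an expectation of a non-increasing function can only decrease under such
   a shift; the function here is the continuation value phi(t+1,u,.), which is
   non-increasing by the induction hypothesis, but only for u <= sigma(t).  Larger
   holdings u are never better than sigma(t): by concavity the stage payoff increases
   up to sigma(t), prices rise over time, and sigma is non-increasing in t. *)

theory Submission
  imports Defs
begin

definition payoff :: "(nat \<Rightarrow> real) \<Rightarrow> real \<Rightarrow> real \<Rightarrow> nat \<Rightarrow> nat \<Rightarrow> real" where
  "payoff v pinit dP t u = v u - real u * price pinit dP t"

definition stochastically_monotone :: "(nat \<Rightarrow> nat \<Rightarrow> nat \<Rightarrow> real) \<Rightarrow> nat \<Rightarrow> nat \<Rightarrow> bool" where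
  "stochastically_monotone K N t \<longleftrightarrow>
     (\<forall>s\<le>N. \<forall>d<N. (\<Sum>d'\<in>{s..N}. K t d' d) \<le> (\<Sum>d'\<in>{s..N}. K t d' (Suc d)))"

lemma Least_argmax_nat:
  fixes f :: "nat \<Rightarrow> 'a::linorder" and m :: nat
  defines "s \<equiv> LEAST u. u \<le> m \<and> (\<forall>w\<le>m. f w \<le> f u)"
  shows "s \<le> m \<and> (\<forall>w\<le>m. f w \<le> f s)"
proof -
  have "Max (f ` {..m}) \<in> f ` {..m}" by (intro Max_in) auto
  then obtain u where "u \<le> m" "f u = Max (f ` {..m})" by (auto simp: image_iff)
  then have "u \<le> m \<and> (\<forall>w\<le>m. f w \<le> f u)" by auto
  then show ?thesis unfolding s_def by (rule LeastI)
qed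

lemma sigma_le: "sigma v m pinit dP t \<le> m"
  and payoff_le_payoff_sigma:
    "w \<le> m \<Longrightarrow> payoff v pinit dP t w \<le> payoff v pinit dP t (sigma v m pinit dP t)"
  using Least_argmax_nat[of m "payoff v pinit dP t"] by (simp_all add: sigma_def payoff_def)

lemma payoff_0: "v 0 = 0 \<Longrightarrow> payoff v pinit dP t 0 = 0"
  by (simp add: payoff_def)

lemma payoff_Suc_time: "payoff v pinit dP (Suc t) u = payoff v pinit dP t u - real u * dP"
  by (simp add: payoff_def price_def algebra_simps)

lemma payoff_antimono_time:
  assumes "dP > 0" "t \<le> t'"
  shows "payoff v pinit dP t' u \<le> payoff v pinit dP t u"
proof -
  have "price pinit dP t \<le> price pinit dP t'"
    using assms by (simp add: price_def mult_right_mono)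
  then show ?thesis by (simp add: payoff_def mult_left_mono)
qed

lemma sigma_Suc_le:
  assumes "dP > 0"
  shows "sigma v m pinit dP (Suc t) \<le> sigma v m pinit dP t"
proof (rule ccontr)
  let ?f = "payoff v pinit dP" and ?a = "sigma v m pinit dP t" and ?b = "sigma v m pinit dP (Suc t)"
  assume "\<not> ?b \<le> ?a"
  then have "real ?a * dP < real ?b * dP" using assms by simp
  moreover have "?f (Suc t) ?a \<le> ?f (Suc t) ?b" "?f t ?b \<le> ?f t ?a"
    using sigma_le payoff_le_payoff_sigma by blast+
  ultimately show False by (simp add: payoff_Suc_time)
qed

lemma concave_diff_antimono:
  fixes f :: "nat \<Rightarrow> real"
  assumes concave: "\<forall>u. 0 < u \<and> u < m \<longrightarrow> f (Suc u) - f u \<le> f u - f (u - 1)"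
    and "j \<le> i" "i < m"
  shows "f (Suc i) - f i \<le> f (Suc j) - f j"
  using \<open>j \<le> i\<close> \<open>i < m\<close>
proof (induction i rule: dec_induct)
  case (step n)
  then show ?case using concave[rule_format, of "Suc n"] by simp
qed simp

lemma concave_mono_below_argmax:
  fixes f :: "nat \<Rightarrow> real"
  assumes concave: "\<forall>u. 0 < u \<and> u < m \<longrightarrow> f (Suc u) - f u \<le> f u - f (u - 1)"
    and max: "s \<le> m" "\<forall>w\<le>m. f w \<le> f s"
    and "a \<le> b" "b \<le> s"
  shows "f a \<le> f b"
proof -
  have up: "f j \<le> f (Suc j)" if "j < s" for j
  proof (rule ccontr)
    assume "\<not> f j \<le> f (Suc j)"
    then have "f (Suc i) - f i < 0" if "i \<in> {j..<s}" for i
      using concave_diff_antimono[OF concave, of j i] that max(1) by auto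
    then have "(\<Sum>i\<in>{j..<s}. f (Suc i) - f i) < (\<Sum>i\<in>{j..<s}. 0)"
      using \<open>j < s\<close> by (intro sum_strict_mono) auto
    then have "f s < f j" using \<open>j < s\<close> by (simp add: sum_Suc_diff')
    then show False using max(1) max(2)[rule_format, of j] \<open>j < s\<close> by simp
  qed
  show ?thesis
    using \<open>a \<le> b\<close> \<open>b \<le> s\<close>
  proof (induction b rule: dec_induct)
    case (step n)
    then show ?case using up[of n] by simp
  qed simp
qed

lemma payoff_mono_below_sigma:
  assumes v_concave: "\<forall>u. 0 < u \<and> u < m \<longrightarrow> v (Suc u) - v u \<le> v u - v (u - 1)"
    and "a \<le> b" "b \<le> sigma v m pinit dP t"
  shows "payoff v pinit dP t a \<le> payoff v pinit dP t b"
proof (rule concave_mono_below_argmax)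
  show "\<forall>u. 0 < u \<and> u < m \<longrightarrow> payoff v pinit dP t (Suc u) - payoff v pinit dP t u
          \<le> payoff v pinit dP t u - payoff v pinit dP t (u - 1)"
    using v_concave by (auto simp: payoff_def of_nat_diff algebra_simps)
qed (use assms sigma_le payoff_le_payoff_sigma in auto)

lemma summation_by_parts_atMost:
  fixes h g :: "nat \<Rightarrow> real"
  shows "(\<Sum>i\<le>n. h i * g i) = (\<Sum>j\<le>n. h j) * g n + (\<Sum>i<n. (\<Sum>j\<le>i. h j) * (g i - g (Suc i)))"
  by (induction n) (simp_all add: algebra_simps)

lemma sum_mult_antimono_of_tail_sums:
  fixes p q g :: "nat \<Rightarrow> real"
  assumes total: "(\<Sum>i\<in>{0..N}. q i) = (\<Sum>i\<in>{0..N}. p i)"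
    and tails: "\<forall>s\<le>N. (\<Sum>i\<in>{s..N}. p i) \<le> (\<Sum>i\<in>{s..N}. q i)"
    and antimono: "\<forall>i<N. g (Suc i) \<le> g i"
  shows "(\<Sum>i\<in>{0..N}. q i * g i) \<le> (\<Sum>i\<in>{0..N}. p i * g i)"
proof -
  define h where "h i = q i - p i" for i
  have total_h: "(\<Sum>j\<le>N. h j) = 0"
    using total by (simp add: h_def atLeast0AtMost sum_subtractf)
  have heads_h: "(\<Sum>j\<le>i. h j) \<le> 0" if "i < N" for i
  proof -
    have "{..N} = {..i} \<union> {Suc i..N}" using that by auto
    then have "(\<Sum>j\<le>N. h j) = (\<Sum>j\<le>i. h j) + (\<Sum>j\<in>{Suc i..N}. h j)"
      by (simp add: sum.union_disjoint)
    moreover have "(\<Sum>j\<in>{Suc i..N}. h j) \<ge> 0"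
      using tails that by (simp add: h_def sum_subtractf)
    ultimately show ?thesis using total_h by simp
  qed
  have "(\<Sum>i<N. (\<Sum>j\<le>i. h j) * (g i - g (Suc i))) \<le> 0"
    by (intro sum_nonpos) (simp add: heads_h antimono mult_nonpos_nonneg)
  then have "(\<Sum>i\<le>N. h i * g i) \<le> 0"
    using summation_by_parts_atMost[of h g N] total_h by simp
  then show ?thesis
    by (simp add: h_def atLeast0AtMost left_diff_distrib sum_subtractf)
qed

lemma Max_image_atLeast0AtMost_le:
  fixes g h :: "nat \<Rightarrow> 'a::linorder"
  assumes "\<And>x. x \<le> a \<Longrightarrow> \<exists>y\<le>b. g x \<le> h y"
  shows "Max (g ` {0..a}) \<le> Max (h ` {0..b})"
proof -
  have "g x \<le> Max (h ` {0..b})" if "x \<le> a" for x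
    using assms[OF that] by (auto intro: order_trans[OF _ Max_ge])
  then show ?thesis by (simp add: Max_le_iff)
qed

declare phi_aux.simps [simp del]

locale value_recursion =
  fixes v :: "nat \<Rightarrow> real" and m N :: nat and pinit dP :: real
    and K :: "nat \<Rightarrow> nat \<Rightarrow> nat \<Rightarrow> real"
  assumes dP_pos: "dP > 0" and v0: "v 0 = 0"
    and K_nonneg: "1 \<le> t \<Longrightarrow> d \<le> N \<Longrightarrow> 0 \<le> K t d' d"
    and K_support: "1 \<le> t \<Longrightarrow> d \<le> N \<Longrightarrow> d < d' \<Longrightarrow> K t d' d = 0"
    and K_sum: "1 \<le> t \<Longrightarrow> d \<le> N \<Longrightarrow> (\<Sum>d'\<in>{0..d}. K t d' d) = 1"
begin

abbreviation "\<phi> \<equiv> phi_aux v m N pinit dP K"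
abbreviation "pay \<equiv> payoff v pinit dP"
abbreviation "\<sigma> \<equiv> sigma v m pinit dP"

definition expect :: "nat \<Rightarrow> nat \<Rightarrow> (nat \<Rightarrow> real) \<Rightarrow> real" where
  "expect t d g = (\<Sum>d'\<in>{0..N}. K t d' d * g d')"

lemma K_sum_full:
  assumes "1 \<le> t" "d \<le> N"
  shows "(\<Sum>d'\<in>{0..N}. K t d' d) = 1"
proof -
  have "{0..N} = {0..d} \<union> {Suc d..N}" using assms by auto
  then have "(\<Sum>d'\<in>{0..N}. K t d' d) = (\<Sum>d'\<in>{0..d}. K t d' d) + (\<Sum>d'\<in>{Suc d..N}. K t d' d)"
    by (simp add: sum.union_disjoint)
  also have "(\<Sum>d'\<in>{Suc d..N}. K t d' d) = 0" using K_support assms by simp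
  finally show ?thesis using K_sum assms by simp
qed

lemma expect_const: "1 \<le> t \<Longrightarrow> d \<le> N \<Longrightarrow> expect t d (\<lambda>_. c) = c"
  by (simp add: expect_def K_sum_full flip: sum_distrib_right)

lemma expect_mono:
  assumes "1 \<le> t" "d \<le> N" "\<And>d'. d' \<le> N \<Longrightarrow> g d' \<le> h d'"
  shows "expect t d g \<le> expect t d h"
  unfolding expect_def using assms by (intro sum_mono mult_left_mono K_nonneg) auto

lemma expect_antimono_demand:
  assumes "stochastically_monotone K N t" "1 \<le> t" "d < N" "\<forall>i<N. g (Suc i) \<le> g i"
  shows "expect t (Suc d) g \<le> expect t d g"
  unfolding expect_def
proof (rule sum_mult_antimono_of_tail_sums)
  show "(\<Sum>i\<in>{0..N}. K t i (Suc d)) = (\<Sum>i\<in>{0..N}. K t i d)"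
    using assms K_sum_full by simp
qed (use assms in \<open>auto simp: stochastically_monotone_def\<close>)

lemma phi_fits: "k + d \<le> m \<Longrightarrow> \<phi> r t k d = pay (t - 1) k"
  by (cases r) (simp_all add: payoff_def phi_aux.simps)

lemma phi_0_exceeds: "\<not> k + d \<le> m \<Longrightarrow> \<phi> 0 t k d = 0"
  by (simp add: phi_aux.simps)

lemma phi_Suc_exceeds:
  "\<not> k + d \<le> m \<Longrightarrow> \<phi> (Suc r) t k d = Max ((\<lambda>u. expect t d (\<phi> r (t + 1) u)) ` {0..k})"
  by (simp add: expect_def phi_aux.simps)

lemma phi_le_payoff_bound:
  assumes "1 \<le> t" "d \<le> N" "\<And>u'. u' \<le> u \<Longrightarrow> pay (t - 1) u' \<le> c"
  shows "\<phi> r t u d \<le> c"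
  using assms
proof (induction r arbitrary: t u d)
  case 0
  have "0 \<le> c" using "0.prems"(3)[of 0] v0 by (simp add: payoff_0)
  then show ?case using "0.prems" by (cases "u + d \<le> m") (simp_all add: phi_fits phi_0_exceeds)
next
  case (Suc r)
  show ?case
  proof (cases "u + d \<le> m")
    case True
    then show ?thesis using Suc.prems by (simp add: phi_fits)
  next
    case False
    have "expect t d (\<phi> r (t + 1) u') \<le> c" if "u' \<le> u" for u'
    proof -
      have "pay t w \<le> c" if "w \<le> u'" for w
      proof -
        have "pay t w \<le> pay (t - 1) w" by (rule payoff_antimono_time[OF dP_pos]) simp
        also have "\<dots> \<le> c" using Suc.prems(3) \<open>w \<le> u'\<close> \<open>u' \<le> u\<close> by simp
        finally show ?thesis .
      qed
      then have "\<phi> r (t + 1) u' d' \<le> c" if "d' \<le> N" for d'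
        using Suc.IH that by simp
      then have "expect t d (\<phi> r (t + 1) u') \<le> expect t d (\<lambda>_. c)"
        using Suc.prems by (intro expect_mono) auto
      then show ?thesis using Suc.prems by (simp add: expect_const)
    qed
    then show ?thesis using False by (simp add: phi_Suc_exceeds Max_le_iff)
  qed
qed

lemma phi_le_phi_sigma:
  assumes "1 \<le> t" "d \<le> N" "\<sigma> (t - 1) \<le> u" "u \<le> m"
  shows "\<phi> r t u d \<le> \<phi> r t (\<sigma> (t - 1)) d"
  using assms
proof (induction r arbitrary: t u d)
  case 0
  let ?s = "\<sigma> (t - 1)"
  have "0 \<le> pay (t - 1) ?s" using payoff_le_payoff_sigma[of 0 m v pinit dP "t - 1"] v0 by (simp add: payoff_0)
  then show ?case
    using "0.prems" payoff_le_payoff_sigma[of u]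
    by (cases "u + d \<le> m"; cases "?s + d \<le> m") (simp_all add: phi_fits phi_0_exceeds)
next
  case (Suc r)
  let ?s = "\<sigma> (t - 1)"
  consider "u + d \<le> m" | "\<not> u + d \<le> m" "?s + d \<le> m" | "\<not> u + d \<le> m" "\<not> ?s + d \<le> m"
    by blast
  then show ?case
  proof cases
    case 1
    then show ?thesis using Suc.prems payoff_le_payoff_sigma[of u] by (simp add: phi_fits)
  next
    case 2
    have "\<phi> (Suc r) t u d \<le> pay (t - 1) ?s"
      using Suc.prems payoff_le_payoff_sigma by (intro phi_le_payoff_bound) auto
    then show ?thesis using 2 by (simp add: phi_fits)
  next
    case 3
    let ?E = "\<lambda>u'. expect t d (\<phi> r (t + 1) u')"
    have "\<exists>w\<le>?s. ?E u' \<le> ?E w" if "u' \<le> u" for u'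
    proof (cases "u' \<le> ?s")
      case False
      have "\<sigma> t \<le> ?s" using sigma_Suc_le[OF dP_pos, of v m pinit "t - 1"] Suc.prems(1) by simp
      moreover have "?E u' \<le> ?E (\<sigma> t)"
        using Suc.prems False \<open>u' \<le> u\<close> \<open>\<sigma> t \<le> ?s\<close>
        by (intro expect_mono) (auto intro: Suc.IH[of "t + 1", simplified])
      ultimately show ?thesis by blast
    qed blast
    then have "Max (?E ` {0..u}) \<le> Max (?E ` {0..?s})"
      by (rule Max_image_atLeast0AtMost_le)
    then show ?thesis using 3 by (simp add: phi_Suc_exceeds)
  qed
qed

lemma phi_antimono_demand:
  assumes v_concave: "\<forall>u. 0 < u \<and> u < m \<longrightarrow> v (Suc u) - v u \<le> v u - v (u - 1)"
    and "\<forall>t'\<in>{t..<t + r}. stochastically_monotone K N t'"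
    and "1 \<le> t" "k \<le> \<sigma> (t - 1)" "d < N"
  shows "\<phi> r t k (Suc d) \<le> \<phi> r t k d"
  using assms(2-)
proof (induction r arbitrary: t k d)
  case 0
  have "0 \<le> pay (t - 1) k"
    using payoff_mono_below_sigma[OF v_concave, of 0 k] "0.prems" v0 by (simp add: payoff_0)
  then show ?case by (cases "k + d \<le> m"; cases "k + Suc d \<le> m") (simp_all add: phi_fits phi_0_exceeds)
next
  case (Suc r)
  consider "k + Suc d \<le> m" | "\<not> k + Suc d \<le> m" "k + d \<le> m" | "\<not> k + Suc d \<le> m" "\<not> k + d \<le> m"
    by linarith
  then show ?case
  proof cases
    case 1
    then show ?thesis by (simp add: phi_fits)
  next
    case 2
    have "\<phi> (Suc r) t k (Suc d) \<le> pay (t - 1) k"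
      using Suc.prems payoff_mono_below_sigma[OF v_concave] by (intro phi_le_payoff_bound) auto
    then show ?thesis using 2 by (simp add: phi_fits)
  next
    case 3
    let ?E1 = "\<lambda>u. expect t (Suc d) (\<phi> r (t + 1) u)"
    let ?E0 = "\<lambda>u. expect t d (\<phi> r (t + 1) u)"
    have \<sigma>_le: "\<sigma> t \<le> \<sigma> (t - 1)"
      using sigma_Suc_le[OF dP_pos, of v m pinit "t - 1"] Suc.prems(2) by simp
    have SM_next: "\<forall>t'\<in>{t + 1..<t + 1 + r}. stochastically_monotone K N t'"
      using Suc.prems(1) by auto
    have "\<phi> r (t + 1) u (Suc i) \<le> \<phi> r (t + 1) u i" if "u \<le> \<sigma> t" "i < N" for u i
      using Suc.IH[OF SM_next] that by simp
    then have E1_le_E0: "?E1 u \<le> ?E0 u" if "u \<le> \<sigma> t" for u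
      using Suc.prems that by (intro expect_antimono_demand) auto
    have "\<exists>w\<le>k. ?E1 u \<le> ?E0 w" if "u \<le> k" for u
    proof (cases "u \<le> \<sigma> t")
      case True
      then show ?thesis using E1_le_E0 that by blast
    next
      case False
      have "?E1 u \<le> ?E1 (\<sigma> t)"
        using Suc.prems False that sigma_le[of v m pinit dP "t - 1"]
        by (intro expect_mono) (auto intro: phi_le_phi_sigma[of "t + 1", simplified])
      also have "\<dots> \<le> ?E0 (\<sigma> t)" by (rule E1_le_E0) simp
      finally show ?thesis using False that by (intro exI[of _ "\<sigma> t"]) simp
    qed
    then have "Max (?E1 ` {0..k}) \<le> Max (?E0 ` {0..k})"
      by (rule Max_image_atLeast0AtMost_le)
    then show ?thesis using 3 by (simp add: phi_Suc_exceeds)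
  qed
qed

end

theorem mainTheorem11:
  fixes n m N :: nat and pinit dP :: real and v :: "nat \<Rightarrow> real"
    and M :: "'a measure" and Z :: "nat \<Rightarrow> 'a \<Rightarrow> real"
    and K :: "nat \<Rightarrow> nat \<Rightarrow> nat \<Rightarrow> real"
  assumes n_ge: "n \<ge> 2" and m_ge: "m \<ge> 1" and N_def: "N = (n - 1) * m"
    and pinit_nonneg: "pinit \<ge> 0" and dP_pos: "dP > 0"
    and v0: "v 0 = 0"
    and v_nonneg: "\<forall>u\<le>m. v u \<ge> 0"
    and v_mono: "\<forall>u<m. v u \<le> v (Suc u)"
    and v_concave: "\<forall>u. 0 < u \<and> u < m \<longrightarrow> v (Suc u) - v u \<le> v u - v (u - 1)"
    and Rbar_ge: "\<lceil>(v 1 - pinit) / dP\<rceil> \<ge> 1"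
    and M_prob: "prob_space M"
    and Z_meas: "\<forall>j\<in>{1..N}. Z j \<in> borel_measurable M"
    and Z_order: "AE \<omega> in M. (\<forall>j\<in>{1..<N}. Z (Suc j) \<omega> \<le> Z j \<omega>) \<and> (\<forall>j\<in>{1..N}. Z j \<omega> \<ge> 0)"
    and K_nonneg: "\<forall>t\<ge>1. \<forall>d\<le>N. \<forall>d'. K t d' d \<ge> 0"
    and K_support: "\<forall>t\<ge>1. \<forall>d\<le>N. \<forall>d'. d' > d \<longrightarrow> K t d' d = 0"
    and K_sum: "\<forall>t\<ge>1. \<forall>d\<le>N. (\<Sum>d'\<in>{0..d}. K t d' d) = 1"
    and K_cond: "\<forall>t\<ge>1. \<forall>d\<le>N. \<forall>d'\<le>N.
        measure M {\<omega>\<in>space M. demand Z N (price pinit dP (t - 1)) \<omega> = d} > 0 \<longrightarrow>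
        K t d' d =
          measure M {\<omega>\<in>space M. demand Z N (price pinit dP t) \<omega> = d'
                                 \<and> demand Z N (price pinit dP (t - 1)) \<omega> = d}
          / measure M {\<omega>\<in>space M. demand Z N (price pinit dP (t - 1)) \<omega> = d}"
    and SM: "\<forall>t\<in>{1..Rbar v pinit dP - 1}. \<forall>s\<le>N. \<forall>d<N.
        (\<Sum>d'\<in>{s..N}. K t d' (Suc d)) \<ge> (\<Sum>d'\<in>{s..N}. K t d' d)"
  shows "\<forall>t\<in>{1..Rbar v pinit dP}. \<forall>k\<le>sigma v m pinit dP (t - 1). \<forall>d<N.
           phi v m N pinit dP K t k d \<ge> phi v m N pinit dP K t k (Suc d)"
proof (intro ballI allI impI)
  fix t k d
  assume t: "t \<in> {1..Rbar v pinit dP}" and k: "k \<le> sigma v m pinit dP (t - 1)" and d: "d < N"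
  interpret value_recursion v m N pinit dP K
    using dP_pos v0 K_nonneg K_support K_sum by unfold_locales auto
  have "\<forall>t'\<in>{t..<t + (Rbar v pinit dP - t)}. stochastically_monotone K N t'"
    using SM t by (auto simp: stochastically_monotone_def)
  then show "phi v m N pinit dP K t k (Suc d) \<le> phi v m N pinit dP K t k d"
    unfolding phi_def using phi_antimono_demand[OF v_concave] t k d by simp
qed

end
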